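(* Let $\alpha$ be a unit speed Frenet curve in $\mathbb{E}^3$ with curvature $\kappa$, let $\beta$ be an osculating mate of $\alpha$, and let $\theta(s)=\int\kappa(s)ds$ be the antiderivative of $\kappa$ with $\beta'=\sin\theta\,T+\cos\theta\,N$. Then $\beta$ is a rectifying curve if and only if $\tan\theta(s)$ is a linear function of $s$, i.e. $\tan\theta(s)=a_1s+a_2$ for real constants $a_1\neq0$, $a_2$.
   Context: $\alpha:I\to\mathbb{E}^3$ is parametrized by arclength $s$, with Frenet frame $\{T,N,B\}$, curvature $\kappa>0$, torsion $\tau$. An osculating mate of $\alpha$ is a curve $\beta(s)=\int(x_1T+x_2N)ds$ with smooth $x_1,x_2$, $x_1^2+x_2^2=1$ and $\beta''\perp\mathrm{span}\{T,N\}$; $\beta$ is assumed to be a Frenet curve, unit speed in $s$, with Frenet frame $\{\bar T,\bar N,\bar B\}$. Being given by an indefinite integral, $\beta$ is determined up to a translation, and "$\beta$ is rectifying" is understood for a suitable choice of this integration constant. A Frenet curve is rectifying if its position vector always lies in its rectifying plane $\mathrm{span}\{\bar T,\bar B\}$; for a unit speed curve with curvature $\bar\kappa$ and torsion $\bar\tau$ this is characterized (up to translation) by $\bar\tau/\bar\kappa=\frac1c(s+b)$ for real constants $c\neq0$, $b$. *)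

theory Defs
  imports "HOL-Analysis.Analysis"
begin

definition smooth_fun_on :: "real set \<Rightarrow> (real \<Rightarrow> real) \<Rightarrow> bool" where
  "smooth_fun_on I f \<longleftrightarrow> (\<forall>k::nat. \<forall>s\<in>I. ((deriv ^^ k) f) differentiable (at s))"

definition frenet_curve_on ::
  "real set \<Rightarrow> (real \<Rightarrow> real^3) \<Rightarrow> (real \<Rightarrow> real^3) \<Rightarrow> (real \<Rightarrow> real^3)
     \<Rightarrow> (real \<Rightarrow> real^3) \<Rightarrow> (real \<Rightarrow> real) \<Rightarrow> (real \<Rightarrow> real) \<Rightarrow> bool" where
  "frenet_curve_on I g T N B k t \<longleftrightarrow>
     (\<forall>s\<in>I.
        (g has_vector_derivative T s) (at s) \<and>
        (T has_vector_derivative (k s *\<^sub>R N s)) (at s) \<and>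
        (N has_vector_derivative (- (k s *\<^sub>R T s) + t s *\<^sub>R B s)) (at s) \<and>
        (B has_vector_derivative (- (t s *\<^sub>R N s))) (at s) \<and>
        norm (T s) = 1 \<and> norm (N s) = 1 \<and> inner (T s) (N s) = 0 \<and>
        B s = cross3 (T s) (N s) \<and> k s > 0)"

definition osculating_mate_on ::
  "real set \<Rightarrow> (real \<Rightarrow> real^3) \<Rightarrow> (real \<Rightarrow> real^3) \<Rightarrow> (real \<Rightarrow> real^3)
     \<Rightarrow> (real \<Rightarrow> real) \<Rightarrow> (real \<Rightarrow> real) \<Rightarrow> bool" where
  "osculating_mate_on I T N beta x1 x2 \<longleftrightarrow>
     smooth_fun_on I x1 \<and> smooth_fun_on I x2 \<and>
     (\<forall>s\<in>I.
        (x1 s)\<^sup>2 + (x2 s)\<^sup>2 = 1 \<and>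
        (beta has_vector_derivative (x1 s *\<^sub>R T s + x2 s *\<^sub>R N s)) (at s) \<and>
        (\<lambda>u. x1 u *\<^sub>R T u + x2 u *\<^sub>R N u) differentiable (at s) \<and>
        inner (vector_derivative (\<lambda>u. x1 u *\<^sub>R T u + x2 u *\<^sub>R N u) (at s)) (T s) = 0 \<and>
        inner (vector_derivative (\<lambda>u. x1 u *\<^sub>R T u + x2 u *\<^sub>R N u) (at s)) (N s) = 0)"

text \<open>A curve with Frenet frame {Tb, Nb, Bb} is rectifying (up to the choice of
  the translation/integration constant C): its position vector always lies in
  the rectifying plane span{Tb, Bb}.\<close>
definition rectifying_on ::
  "real set \<Rightarrow> (real \<Rightarrow> real^3) \<Rightarrow> (real \<Rightarrow> real^3) \<Rightarrow> (real \<Rightarrow> real^3) \<Rightarrow> bool" where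
  "rectifying_on I g Tb Bb \<longleftrightarrow> (\<exists>C. \<forall>s\<in>I. g s + C \<in> span {Tb s, Bb s})"

end

theory Submission
  imports Defs
begin

(* Since beta' = sin theta T + cos theta N and theta' = kappa, the Frenet equations of alpha give
   beta'' = tau cos theta B. So the principal normal of beta is parallel to B, and the rectifying
   plane of beta is the osculating plane span {T, N} of alpha: beta is rectifying iff some
   translate P = beta + C stays in span {T, N}. Differentiating P . B = 0 and P . N = 0 gives
   kappa (P . T) = cos theta, and then cos theta (P . T) = cos^2 theta / kappa has derivative 0;
   as (tan theta)' = kappa / cos^2 theta, this says that tan theta is linear. Conversely, if
   tan theta = a1 s + a2 then kappa = a1 cos^2 theta and beta - T / (a1 cos theta) is constant. *)

lemma has_vector_derivative_inner:
  fixes f g :: "real \<Rightarrow> 'a::real_inner"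
  assumes "(f has_vector_derivative f') (at s)" "(g has_vector_derivative g') (at s)"
  shows "((\<lambda>u. f u \<bullet> g u) has_real_derivative (f s \<bullet> g' + f' \<bullet> g s)) (at s)"
  unfolding has_real_derivative_iff_has_vector_derivative
  by (rule bounded_bilinear.has_vector_derivative[OF bounded_bilinear_inner assms])

lemma has_real_derivative_eq_0_if_vanishing_on_open:
  assumes "open I" "s \<in> I" "(f has_real_derivative D) (at s)"
    and "\<And>u. u \<in> I \<Longrightarrow> f u = 0"
  shows "D = 0"
proof -
  have "((\<lambda>_. 0) has_real_derivative D) (at s)"
    using has_field_derivative_transform_within_open[OF assms(3,1,2)] assms(4) by simp
  then show ?thesis
    using DERIV_const DERIV_unique by blast
qed

lemma constant_on_interval_if_has_vector_derivative_0:
  fixes f :: "real \<Rightarrow> 'a::real_normed_vector"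
  assumes "is_interval I" "\<And>s. s \<in> I \<Longrightarrow> (f has_vector_derivative 0) (at s)"
  obtains c where "\<And>s. s \<in> I \<Longrightarrow> f s = c"
  using has_vector_derivative_zero_constant[of I f] assms
  by (auto simp: is_interval_convex has_vector_derivative_at_within)

lemma frenet_frame_inner:
  assumes "frenet_curve_on I g T N B k t" "s \<in> I"
  shows "T s \<bullet> T s = 1" "N s \<bullet> N s = 1" "T s \<bullet> N s = 0" "N s \<bullet> T s = 0"
    and "B s \<bullet> T s = 0" "B s \<bullet> N s = 0" "T s \<bullet> B s = 0" "N s \<bullet> B s = 0"
  using assms by (auto simp: frenet_curve_on_def dot_cross_self inner_commute norm_eq_1)

lemma frenet_rotated_tangent_derivative:
  assumes "frenet_curve_on I g T N B k t" "s \<in> I"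
    and "(\<theta> has_real_derivative k s) (at s)"
  shows "((\<lambda>u. sin (\<theta> u) *\<^sub>R T u + cos (\<theta> u) *\<^sub>R N u) has_vector_derivative
           (t s * cos (\<theta> s)) *\<^sub>R B s) (at s)"
proof -
  have "((\<lambda>u. sin (\<theta> u) *\<^sub>R T u + cos (\<theta> u) *\<^sub>R N u) has_vector_derivative
      sin (\<theta> s) *\<^sub>R (k s *\<^sub>R N s) + (cos (\<theta> s) * k s) *\<^sub>R T s
      + (cos (\<theta> s) *\<^sub>R (- (k s *\<^sub>R T s) + t s *\<^sub>R B s) + (- sin (\<theta> s) * k s) *\<^sub>R N s)) (at s)"
    using assms
    by (intro derivative_intros) (auto simp: frenet_curve_on_def intro!: derivative_eq_intros)
  then show ?thesis
    by (simp add: algebra_simps)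
qed

lemma osculating_mate_tangent:
  assumes "osculating_mate_on I T N beta x1 x2" "frenet_curve_on I beta Tb Nb Bb k t" "s \<in> I"
  shows "Tb s = x1 s *\<^sub>R T s + x2 s *\<^sub>R N s"
proof -
  have "(beta has_vector_derivative x1 s *\<^sub>R T s + x2 s *\<^sub>R N s) (at s)"
    using assms(1,3) by (simp add: osculating_mate_on_def)
  moreover have "(beta has_vector_derivative Tb s) (at s)"
    using assms(2,3) by (simp add: frenet_curve_on_def)
  ultimately show ?thesis
    by (rule vector_derivative_unique_at[symmetric])
qed

locale osculating_mate_frames =
  fixes I :: "real set"
    and alpha beta T N B Tb Nb Bb :: "real \<Rightarrow> real^3"
    and \<kappa> \<tau> \<kappa>b \<tau>b \<theta> :: "real \<Rightarrow> real"
  assumes open_I: "open I"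
    and interval_I: "is_interval I"
    and frenet_alpha: "frenet_curve_on I alpha T N B \<kappa> \<tau>"
    and frenet_beta: "frenet_curve_on I beta Tb Nb Bb \<kappa>b \<tau>b"
    and theta_deriv: "\<And>s. s \<in> I \<Longrightarrow> (\<theta> has_real_derivative \<kappa> s) (at s)"
    and tangent_beta: "\<And>s. s \<in> I \<Longrightarrow> Tb s = sin (\<theta> s) *\<^sub>R T s + cos (\<theta> s) *\<^sub>R N s"
begin

lemma curvature_pos_alpha: "s \<in> I \<Longrightarrow> \<kappa> s > 0"
  and curvature_pos_beta: "s \<in> I \<Longrightarrow> \<kappa>b s > 0"
  using frenet_alpha frenet_beta by (auto simp: frenet_curve_on_def)

lemma curvature_normal_beta:
  assumes "s \<in> I"
  shows "\<kappa>b s *\<^sub>R Nb s = (\<tau> s * cos (\<theta> s)) *\<^sub>R B s"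
proof -
  have "(Tb has_vector_derivative (\<tau> s * cos (\<theta> s)) *\<^sub>R B s) (at s)"
    using frenet_rotated_tangent_derivative[OF frenet_alpha assms theta_deriv[OF assms]]
    by (rule has_vector_derivative_transform_within_open[OF _ open_I assms]) (simp add: tangent_beta)
  moreover have "(Tb has_vector_derivative \<kappa>b s *\<^sub>R Nb s) (at s)"
    using frenet_beta assms by (simp add: frenet_curve_on_def)
  ultimately show ?thesis
    using vector_derivative_unique_at by metis
qed

lemma cos_theta_nonzero: "s \<in> I \<Longrightarrow> cos (\<theta> s) \<noteq> 0"
  and torsion_nonzero_alpha: "s \<in> I \<Longrightarrow> \<tau> s \<noteq> 0"
proof -
  assume s: "s \<in> I"
  then have "\<kappa>b s *\<^sub>R Nb s \<noteq> 0"
    using frenet_beta by (auto simp: frenet_curve_on_def)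
  then show "cos (\<theta> s) \<noteq> 0" "\<tau> s \<noteq> 0"
    by (auto simp: curvature_normal_beta[OF s])
qed

lemma normal_beta:
  assumes "s \<in> I"
  shows "Nb s = (\<tau> s * cos (\<theta> s) / \<kappa>b s) *\<^sub>R B s"
proof -
  have "Nb s = inverse (\<kappa>b s) *\<^sub>R (\<kappa>b s *\<^sub>R Nb s)"
    using curvature_pos_beta[OF assms] by simp
  then show ?thesis
    by (simp add: curvature_normal_beta[OF assms] divide_inverse_commute)
qed

lemma binormal_beta:
  assumes "s \<in> I"
  shows "Bb s = (\<tau> s * cos (\<theta> s) / \<kappa>b s) *\<^sub>R (cos (\<theta> s) *\<^sub>R T s - sin (\<theta> s) *\<^sub>R N s)"
proof -
  have "B s = cross3 (T s) (N s)" "Bb s = cross3 (Tb s) (Nb s)"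
    using frenet_alpha frenet_beta assms by (auto simp: frenet_curve_on_def)
  then show ?thesis
    using frenet_frame_inner[OF frenet_alpha assms]
    by (simp add: tangent_beta[OF assms] normal_beta[OF assms] cross_add_left cross_mult_left
        cross_mult_right Lagrange algebra_simps)
qed

lemma rectifying_plane_beta_eq_osculating_plane_alpha:
  assumes "s \<in> I"
  shows "span {Tb s, Bb s} = span {T s, N s}"
proof -
  define c where "c = cos (\<theta> s)"
  define d where "d = sin (\<theta> s)"
  define r where "r = \<tau> s * c / \<kappa>b s"
  have "r \<noteq> 0"
    using cos_theta_nonzero[OF assms] torsion_nonzero_alpha[OF assms] curvature_pos_beta[OF assms]
    by (simp add: r_def c_def)
  have Tb: "Tb s = d *\<^sub>R T s + c *\<^sub>R N s" and Bb: "Bb s = r *\<^sub>R (c *\<^sub>R T s - d *\<^sub>R N s)"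
    using tangent_beta binormal_beta assms by (simp_all add: c_def d_def r_def)
  have "c * c + d * d = 1"
    by (simp add: c_def d_def flip: power2_eq_square)
  then have T: "T s = d *\<^sub>R Tb s + (c / r) *\<^sub>R Bb s"
    and N: "N s = c *\<^sub>R Tb s - (d / r) *\<^sub>R Bb s"
    using \<open>r \<noteq> 0\<close> unfolding Tb Bb
    by (simp_all add: algebra_simps flip: scaleR_add_left)
  have "{Tb s, Bb s} \<subseteq> span {T s, N s}"
    unfolding Tb Bb by (simp add: span_add span_diff span_scale span_base)
  moreover have "{T s, N s} \<subseteq> span {Tb s, Bb s}"
    by (subst T, subst N) (simp add: span_add span_diff span_scale span_base)
  ultimately show ?thesis
    by (simp only: span_eq)
qed

lemma rectifying_iff_translate_in_osculating_plane:
  "rectifying_on I beta Tb Bb \<longleftrightarrow> (\<exists>C. \<forall>s\<in>I. beta s + C \<in> span {T s, N s})"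
  unfolding rectifying_on_def by (simp add: rectifying_plane_beta_eq_osculating_plane_alpha)

lemma inner_tangent_beta:
  assumes "s \<in> I"
  shows "Tb s \<bullet> T s = sin (\<theta> s)" "Tb s \<bullet> N s = cos (\<theta> s)" "Tb s \<bullet> B s = 0"
  using frenet_frame_inner[OF frenet_alpha assms] by (simp_all add: tangent_beta[OF assms] inner_add_left)

lemma translate_beta_deriv: "s \<in> I \<Longrightarrow> ((\<lambda>u. beta u + C) has_vector_derivative Tb s) (at s)"
  using frenet_beta by (auto simp: frenet_curve_on_def intro!: derivative_eq_intros)

lemma tan_theta_deriv:
  assumes "s \<in> I"
  shows "((\<lambda>u. tan (\<theta> u)) has_real_derivative \<kappa> s / (cos (\<theta> s))\<^sup>2) (at s)"
  using theta_deriv[OF assms] cos_theta_nonzero[OF assms]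
  by (auto intro!: derivative_eq_intros simp: field_simps)

context
  fixes P :: "real \<Rightarrow> real^3"
  assumes P_deriv: "\<And>s. s \<in> I \<Longrightarrow> (P has_vector_derivative Tb s) (at s)"
    and P_osculating: "\<And>s. s \<in> I \<Longrightarrow> P s \<in> span {T s, N s}"
begin

lemma position_inner_binormal:
  assumes "s \<in> I"
  shows "P s \<bullet> B s = 0"
proof -
  have "orthogonal (B s) (P s)"
    by (rule orthogonal_to_span[OF P_osculating[OF assms]])
      (use frenet_frame_inner[OF frenet_alpha assms] in \<open>auto simp: orthogonal_def\<close>)
  then show ?thesis
    by (simp add: orthogonal_def inner_commute)
qed

lemma position_inner_normal:
  assumes "s \<in> I"
  shows "P s \<bullet> N s = 0"
proof -
  have "((\<lambda>u. P u \<bullet> B u) has_real_derivative P s \<bullet> - (\<tau> s *\<^sub>R N s) + Tb s \<bullet> B s) (at s)"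
    using frenet_alpha assms
    by (intro has_vector_derivative_inner P_deriv) (auto simp: frenet_curve_on_def)
  then have "P s \<bullet> - (\<tau> s *\<^sub>R N s) + Tb s \<bullet> B s = 0"
    by (rule has_real_derivative_eq_0_if_vanishing_on_open[OF open_I assms _ position_inner_binormal])
  then show ?thesis
    using torsion_nonzero_alpha[OF assms] by (simp add: inner_tangent_beta[OF assms])
qed

lemma curvature_position_inner_tangent:
  assumes "s \<in> I"
  shows "\<kappa> s * (P s \<bullet> T s) = cos (\<theta> s)"
proof -
  have "((\<lambda>u. P u \<bullet> N u) has_real_derivative
      P s \<bullet> (- (\<kappa> s *\<^sub>R T s) + \<tau> s *\<^sub>R B s) + Tb s \<bullet> N s) (at s)"
    using frenet_alpha assms
    by (intro has_vector_derivative_inner P_deriv) (auto simp: frenet_curve_on_def)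
  then have "P s \<bullet> (- (\<kappa> s *\<^sub>R T s) + \<tau> s *\<^sub>R B s) + Tb s \<bullet> N s = 0"
    by (rule has_real_derivative_eq_0_if_vanishing_on_open[OF open_I assms _ position_inner_normal])
  then show ?thesis
    by (simp add: inner_tangent_beta[OF assms] position_inner_binormal[OF assms] inner_diff_right)
qed

lemma cos_sq_div_curvature_constant:
  obtains K where "\<And>s. s \<in> I \<Longrightarrow> (cos (\<theta> s))\<^sup>2 / \<kappa> s = K"
proof -
  define g where "g u = cos (\<theta> u) * (P u \<bullet> T u)" for u
  have "(g has_vector_derivative 0) (at s)" if s: "s \<in> I" for s
  proof -
    have "((\<lambda>u. P u \<bullet> T u) has_real_derivative P s \<bullet> (\<kappa> s *\<^sub>R N s) + Tb s \<bullet> T s) (at s)"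
      using frenet_alpha s
      by (intro has_vector_derivative_inner P_deriv) (auto simp: frenet_curve_on_def)
    then have "((\<lambda>u. P u \<bullet> T u) has_real_derivative sin (\<theta> s)) (at s)"
      by (simp add: position_inner_normal[OF s] inner_tangent_beta[OF s])
    moreover have "((\<lambda>u. cos (\<theta> u)) has_real_derivative - sin (\<theta> s) * \<kappa> s) (at s)"
      using theta_deriv[OF s] by (auto intro!: derivative_eq_intros)
    ultimately have "(g has_real_derivative
        - sin (\<theta> s) * (\<kappa> s * (P s \<bullet> T s)) + cos (\<theta> s) * sin (\<theta> s)) (at s)"
      unfolding g_def using DERIV_mult by (fastforce simp: algebra_simps)
    then show ?thesis
      by (simp add: curvature_position_inner_tangent[OF s] has_real_derivative_iff_has_vector_derivative)
  qed
  then obtain K where "\<And>s. s \<in> I \<Longrightarrow> g s = K"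
    using constant_on_interval_if_has_vector_derivative_0[OF interval_I] by blast
  moreover have "g s = (cos (\<theta> s))\<^sup>2 / \<kappa> s" if "s \<in> I" for s
    using curvature_position_inner_tangent[OF that] curvature_pos_alpha[OF that]
    by (simp add: g_def field_simps power2_eq_square)
  ultimately show ?thesis
    using that by simp
qed

end

lemma tan_theta_linear_if_cos_sq_div_curvature_constant:
  assumes "I \<noteq> {}" and K: "\<And>s. s \<in> I \<Longrightarrow> (cos (\<theta> s))\<^sup>2 / \<kappa> s = K"
  shows "\<exists>a1 a2. a1 \<noteq> 0 \<and> (\<forall>s\<in>I. tan (\<theta> s) = a1 * s + a2)"
proof -
  obtain s0 where "s0 \<in> I"
    using assms(1) by blast
  then have "K > 0"
    using K cos_theta_nonzero curvature_pos_alpha by (metis divide_pos_pos zero_less_power2)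
  define h where "h u = tan (\<theta> u) - u / K" for u
  have "(h has_vector_derivative 0) (at s)" if "s \<in> I" for s
  proof -
    have "((\<lambda>u. u / K) has_real_derivative 1 / K) (at s)"
      by (rule DERIV_cdivide[OF DERIV_ident, simplified])
    then have "(h has_real_derivative \<kappa> s / (cos (\<theta> s))\<^sup>2 - 1 / K) (at s)"
      unfolding h_def by (rule DERIV_diff[OF tan_theta_deriv[OF that]])
    moreover have "\<kappa> s / (cos (\<theta> s))\<^sup>2 = 1 / K"
      using K[OF that] cos_theta_nonzero[OF that] \<open>K > 0\<close> by (auto simp: field_simps)
    ultimately show ?thesis
      by (simp add: has_real_derivative_iff_has_vector_derivative)
  qed
  then obtain a2 where "\<And>s. s \<in> I \<Longrightarrow> h s = a2"
    using constant_on_interval_if_has_vector_derivative_0[OF interval_I] by blast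
  then show ?thesis
    using \<open>K > 0\<close> by (intro exI[of _ "1 / K"] exI[of _ a2]) (auto simp: h_def field_simps)
qed

context
  fixes a1 a2 :: real
  assumes tan_linear: "\<And>s. s \<in> I \<Longrightarrow> tan (\<theta> s) = a1 * s + a2"
begin

lemma curvature_eq_if_tan_theta_linear:
  assumes "s \<in> I"
  shows "\<kappa> s = a1 * (cos (\<theta> s))\<^sup>2"
proof -
  have "((\<lambda>u. a1 * u + a2) has_real_derivative a1) (at s)"
    by (auto intro!: derivative_eq_intros)
  then have "((\<lambda>u. tan (\<theta> u)) has_real_derivative a1) (at s)"
    by (rule has_field_derivative_transform_within_open[OF _ open_I assms]) (simp add: tan_linear)
  then have "\<kappa> s / (cos (\<theta> s))\<^sup>2 = a1"
    using tan_theta_deriv[OF assms] DERIV_unique by blast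
  then show ?thesis
    using cos_theta_nonzero[OF assms] by (simp add: field_simps)
qed

lemma translate_parallel_tangent_if_tan_theta_linear:
  assumes "a1 \<noteq> 0"
  obtains C where "\<And>s. s \<in> I \<Longrightarrow> beta s + C = (1 / (a1 * cos (\<theta> s))) *\<^sub>R T s"
proof -
  define f where "f u = 1 / (a1 * cos (\<theta> u))" for u
  have "((\<lambda>u. f u *\<^sub>R T u - beta u) has_vector_derivative 0) (at s)" if s: "s \<in> I" for s
  proof -
    have "(f has_real_derivative a1 * (sin (\<theta> s) * \<kappa> s) / (a1 * cos (\<theta> s))\<^sup>2) (at s)"
      unfolding f_def using theta_deriv[OF s] cos_theta_nonzero[OF s] assms
      by (auto intro!: derivative_eq_intros simp: power2_eq_square)
    then have "(f has_real_derivative sin (\<theta> s)) (at s)"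
      using curvature_eq_if_tan_theta_linear[OF s] cos_theta_nonzero[OF s] assms
      by (simp add: field_simps power2_eq_square)
    moreover have "f s * \<kappa> s = cos (\<theta> s)"
      using curvature_eq_if_tan_theta_linear[OF s] cos_theta_nonzero[OF s] assms
      by (simp add: f_def field_simps power2_eq_square)
    ultimately show ?thesis
      using frenet_alpha frenet_beta s
      by (auto intro!: derivative_eq_intros simp: frenet_curve_on_def tangent_beta[OF s])
  qed
  then obtain C where "\<And>s. s \<in> I \<Longrightarrow> f s *\<^sub>R T s - beta s = C"
    using constant_on_interval_if_has_vector_derivative_0[OF interval_I] by blast
  then show ?thesis
    using that[of C] by (auto simp: f_def algebra_simps)
qed

end

end

theorem theorem7:
  fixes I :: "real set"
    and alpha beta T N B Tb Nb Bb :: "real \<Rightarrow> real^3"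
    and \<kappa> \<tau> \<kappa>b \<tau>b x1 x2 \<theta> :: "real \<Rightarrow> real"
  assumes "open I" and "is_interval I" and "I \<noteq> {}"
    and "frenet_curve_on I alpha T N B \<kappa> \<tau>"
    and "osculating_mate_on I T N beta x1 x2"
    and "frenet_curve_on I beta Tb Nb Bb \<kappa>b \<tau>b"
    and "\<forall>s\<in>I. (\<theta> has_real_derivative \<kappa> s) (at s)"
    and "\<forall>s\<in>I. x1 s = sin (\<theta> s) \<and> x2 s = cos (\<theta> s)"
  shows "rectifying_on I beta Tb Bb \<longleftrightarrow>
         (\<exists>a1 a2. a1 \<noteq> 0 \<and> (\<forall>s\<in>I. tan (\<theta> s) = a1 * s + a2))"
proof -
  have "Tb s = sin (\<theta> s) *\<^sub>R T s + cos (\<theta> s) *\<^sub>R N s" if "s \<in> I" for s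
    using osculating_mate_tangent[OF assms(5,6) that] assms(8) that by simp
  then interpret osculating_mate_frames I alpha beta T N B Tb Nb Bb \<kappa> \<tau> \<kappa>b \<tau>b \<theta>
    using assms by unfold_locales auto
  show ?thesis
  proof
    assume "rectifying_on I beta Tb Bb"
    then obtain C where "\<And>s. s \<in> I \<Longrightarrow> beta s + C \<in> span {T s, N s}"
      by (auto simp: rectifying_iff_translate_in_osculating_plane)
    then obtain K where "\<And>s. s \<in> I \<Longrightarrow> (cos (\<theta> s))\<^sup>2 / \<kappa> s = K"
      using cos_sq_div_curvature_constant[OF translate_beta_deriv] by blast
    then show "\<exists>a1 a2. a1 \<noteq> 0 \<and> (\<forall>s\<in>I. tan (\<theta> s) = a1 * s + a2)"
      by (rule tan_theta_linear_if_cos_sq_div_curvature_constant[OF \<open>I \<noteq> {}\<close>])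
  next
    assume "\<exists>a1 a2. a1 \<noteq> 0 \<and> (\<forall>s\<in>I. tan (\<theta> s) = a1 * s + a2)"
    then obtain a1 a2 where "a1 \<noteq> 0" "\<And>s. s \<in> I \<Longrightarrow> tan (\<theta> s) = a1 * s + a2"
      by blast
    then obtain C where "\<And>s. s \<in> I \<Longrightarrow> beta s + C = (1 / (a1 * cos (\<theta> s))) *\<^sub>R T s"
      using translate_parallel_tangent_if_tan_theta_linear by blast
    then have "\<forall>s\<in>I. beta s + C \<in> span {T s, N s}"
      by (simp add: span_base span_scale)
    then show "rectifying_on I beta Tb Bb"
      unfolding rectifying_iff_translate_in_osculating_plane by blast
  qed
qed

end
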